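(* For every $f\in C_c^\infty(S\mathbb D_H^\circ)$, $$\int_{\mathcal G_H}\int_{\mathbb R}f(\gamma_{\beta,a}(t),\dot\gamma_{\beta,a}(t))\,dt\,d\beta\,da=\int_{S\mathbb D_H^\circ}f\,d\Sigma^3.$$
   Context: $\mathbb D_H^\circ=\{|z|<1\}$ with Poincaré metric $g_H=c(z)^{-2}|dz|^2$, $c(z)=(1-|z|^2)/2$. Its unit tangent bundle $S\mathbb D_H^\circ$ is identified with $\mathbb D_H^\circ\times\mathbb R/2\pi\mathbb Z$ via $(z,\theta)\leftrightarrow(z,2\,\mathrm{Re}(c(z)e^{i\theta}\partial_z))$, and $d\Sigma^3=c(z)^{-2}\frac{d\bar z\wedge dz}{2i}\wedge d\theta$ is the Liouville form (as a measure). $\mathcal G_H=\mathbb S^1_\beta\times\mathbb R_a$ with measure $d\beta\,da$, and $\gamma_{\beta,a}(t)=e^{i\beta}\frac{(2+ia)\tanh(t/2)+ia}{ia\tanh(t/2)-2+ia}$ (unit-speed geodesics). *)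

theory Defs
  imports "HOL-Analysis.Analysis"
begin

coinductive C_inf :: "('a::euclidean_space \<Rightarrow> real) \<Rightarrow> bool" where
  "(\<And>x. (g has_derivative g' x) (at x)) \<Longrightarrow> (\<And>v. C_inf (\<lambda>x. g' x v)) \<Longrightarrow> C_inf g"

text \<open>Conformal factor c(z) = (1 - |z|^2)/2 of the Poincare metric.\<close>
definition cH :: "complex \<Rightarrow> real" where
  "cH z = (1 - (cmod z)\<^sup>2) / 2"

text \<open>Functions in C_c-infinity of the unit tangent bundle, identified with the unit disc
  times R/2piZ: smooth functions of (z, theta), 2pi-periodic in theta, whose support lies in
  K x R for a compact K inside the open unit disc (extended by zero outside).\<close>
definition Cc_inf_SD :: "(complex \<times> real \<Rightarrow> real) \<Rightarrow> bool" where
  "Cc_inf_SD f \<longleftrightarrow> C_inf f \<and> (\<forall>z \<theta>. f (z, \<theta> + 2 * pi) = f (z, \<theta>)) \<and>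
     (\<exists>K. compact K \<and> K \<subseteq> ball 0 1 \<and> (\<forall>z \<theta>. z \<notin> K \<longrightarrow> f (z, \<theta>) = 0))"

text \<open>The unit speed geodesics gamma_{beta,a}.\<close>
definition gammaH :: "real \<Rightarrow> real \<Rightarrow> real \<Rightarrow> complex" where
  "gammaH \<beta> a t = exp (\<i> * of_real \<beta>) *
     (((2 + \<i> * of_real a) * of_real (tanh (t / 2)) + \<i> * of_real a) /
      (\<i> * of_real a * of_real (tanh (t / 2)) - 2 + \<i> * of_real a))"

text \<open>Angle coordinate of the velocity: gamma'(t) = 2 Re(c(gamma(t)) e^{i theta} d_z), i.e. as a
  complex number gamma'(t) = c(gamma(t)) e^{i theta}.\<close>
definition thetaH :: "real \<Rightarrow> real \<Rightarrow> real \<Rightarrow> real" where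
  "thetaH \<beta> a t = Arg (vector_derivative (gammaH \<beta> a) (at t) / of_real (cH (gammaH \<beta> a t)))"

end

theory Submission
  imports Defs
begin

(* Write T = tanh (t/2), s = a (1 + T) / 2, U = (T + i s) / (1 + i s) and phi = pi + 2 arctan s
  (tanh_half t, geo_s a t, geo_base a t and geo_angle a t).  Then gamma_{beta,a}(t) = e^{i (beta + phi)} U,
  and the velocity angle of the geodesic is beta + phi modulo 2 pi.  As f is 2 pi-periodic in the
  angle, the substitution theta = beta + phi on the circle removes beta, and by Fubini the left-hand
  side becomes the integral of f (e^{i theta} U(a,t), theta) over (a, t, theta) in R x R x [0, 2 pi).
  The map (a, t, theta) |-> (e^{i theta} U(a,t), theta) is a bijection onto the disc times [0, 2 pi)
  with Jacobian determinant -c(U)^2, so the change of variables formula gives the right-hand side. *)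

lemma one_plus_i_of_real_neq_0 [simp]: "1 + \<i> * of_real s \<noteq> 0"
  and one_minus_i_of_real_neq_0 [simp]: "1 - \<i> * of_real s \<noteq> 0"
  by (simp_all add: complex_eq_iff)

lemma one_plus_sq_eq_complex_factor:
  "of_real (1 + s\<^sup>2) = (1 + \<i> * of_real s) * (1 - \<i> * of_real s)"
  by (simp add: algebra_simps power2_eq_square)

lemma cis_arctan: "cis (arctan s) = (1 + \<i> * of_real s) / of_real (sqrt (1 + s\<^sup>2))"
proof -
  have "sqrt (1 + s\<^sup>2) > 0" by (simp add: add_pos_nonneg)
  then show ?thesis
    by (simp add: cis.ctr cos_arctan sin_arctan complex_eq_iff)
qed

lemma cis_pi_plus_double_arctan:
  "cis (pi + 2 * arctan s) = - (1 + \<i> * of_real s) / (1 - \<i> * of_real s)"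
proof -
  have sq: "sqrt (1 + s\<^sup>2) ^ 2 = 1 + s\<^sup>2" by (simp add: add_nonneg_nonneg)
  have "cis (pi + 2 * arctan s) = cis pi * (cis (arctan s) * cis (arctan s))"
    by (simp only: cis_mult mult_2)
  also have "\<dots> = - (cis (arctan s))\<^sup>2"
    by (simp add: power2_eq_square)
  also have "\<dots> = - (1 + \<i> * of_real s)\<^sup>2 / of_real (1 + s\<^sup>2)"
    by (simp add: cis_arctan power_divide sq flip: of_real_power)
  also have "\<dots> = - (1 + \<i> * of_real s) / (1 - \<i> * of_real s)"
    unfolding one_plus_sq_eq_complex_factor by (simp add: power2_eq_square minus_divide_left)
  finally show ?thesis .
qed

lemma tanh_artanh_real:
  assumes "\<bar>x::real\<bar> < 1"
  shows "tanh (artanh x) = x"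
proof -
  have pos: "1 + x > 0" "1 - x > 0"
    using assms by auto
  then have "- 2 * artanh x = ln (1 - x) - ln (1 + x)"
    by (simp add: artanh_def ln_div)
  then have exp_artanh: "exp (- 2 * artanh x) = (1 - x) / (1 + x)"
    using pos by (simp add: exp_diff)
  show ?thesis
    unfolding tanh_real_altdef exp_artanh using pos by (simp add: field_simps)
qed

lemma periodic_at_normalize_angle:
  assumes "\<And>x. g (x + 2 * pi) = g x"
  shows "g (normalize_angle x) = g x"
proof -
  interpret periodic_fun_simple g "2 * pi"
    by unfold_locales (rule assms)
  show ?thesis
    using plus_of_int [of x "- \<lceil>x / (2 * pi) - 1 / 2\<rceil>"]
    by (simp add: normalize_angle_def)
qed

lemma C_inf_continuous: "C_inf g \<Longrightarrow> continuous_on UNIV g"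
  by (erule C_inf.cases) (metis has_derivative_continuous continuous_at_imp_continuous_on)

lemma compact_subset_ball_imp_cball:
  fixes K :: "'a::metric_space set"
  assumes "compact K" "K \<subseteq> ball a e"
  obtains r where "r < e" "K \<subseteq> cball a r"
proof (cases "K = {}")
  case True
  then show ?thesis
    using that [of "e - 1"] by simp
next
  case False
  have "continuous_on K (dist a)"
    by (intro continuous_on_dist continuous_on_const continuous_on_id)
  then obtain z where "z \<in> K" "\<And>y. y \<in> K \<Longrightarrow> dist a y \<le> dist a z"
    using continuous_attains_sup [OF assms(1) False] by blast
  then show ?thesis
    using that [of "dist a z"] assms(2) by (auto simp: subset_iff)
qed

lemma has_derivative_vec_nth [derivative_intros]: "((\<lambda>x. x $ i) has_derivative (\<lambda>h. h $ i)) F"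
  by (rule bounded_linear_imp_has_derivative) (rule bounded_linear_vec_nth)

lemma has_derivative_vector_3:
  fixes f g k :: "'a::real_normed_vector \<Rightarrow> real"
  assumes "(f has_derivative f') (at x within S)" "(g has_derivative g') (at x within S)"
    and "(k has_derivative k') (at x within S)"
  shows "((\<lambda>x. vector [f x, g x, k x] :: real^3) has_derivative (\<lambda>h. vector [f' h, g' h, k' h]))
    (at x within S)"
proof (subst has_derivative_componentwise_within, intro ballI)
  fix b :: "real^3"
  assume "b \<in> Basis"
  then obtain i where "b = axis i 1"
    by (auto simp: Basis_vec_def)
  then show "((\<lambda>x. vector [f x, g x, k x] \<bullet> b) has_derivative (\<lambda>h. vector [f' h, g' h, k' h] \<bullet> b))
      (at x within S)"
    using assms exhaust_3[of i] by (auto simp: inner_axis)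
qed

(* The third row of the matrix is (0, 0, 1), so only the 2 x 2 block (c p, c q) contributes. *)
lemma det_matrix_complex_lift:
  fixes c p q r :: complex
  defines "D \<equiv> \<lambda>h::real^3. of_real (h$1) * p + of_real (h$2) * q + of_real (h$3) * r"
  shows "det (matrix (\<lambda>h. vector [Re (c * D h), Im (c * D h), h$3]))
    = (cmod c)\<^sup>2 * Im (cnj p * q)"
  unfolding D_def matrix_def det_3 cmod_power2
  by (simp add: axis_def algebra_simps power2_eq_square)

lemma inner_image_Basis:
  fixes m :: "'a::euclidean_space \<Rightarrow> 'b::euclidean_space"
  assumes "linear m" "bij_betw m Basis Basis" "b \<in> Basis"
  shows "m x \<bullet> m b = x \<bullet> b"
proof -
  have ortho: "m c \<bullet> m b = (if c = b then 1 else 0)" if "c \<in> Basis" for c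
  proof -
    have "m c \<in> Basis" "m b \<in> Basis" "m c = m b \<longleftrightarrow> c = b"
      using assms(2,3) that by (auto simp: bij_betw_def inj_on_eq_iff)
    then show ?thesis
      by (simp add: inner_Basis)
  qed
  have "m x = (\<Sum>c\<in>Basis. (x \<bullet> c) *\<^sub>R m c)"
    using linear_sum [OF assms(1)] linear_scale [OF assms(1)]
    by (metis (no_types, lifting) euclidean_representation sum.cong)
  then have "m x \<bullet> m b = (\<Sum>c\<in>Basis. (x \<bullet> c) * (m c \<bullet> m b))"
    by (simp add: inner_sum_left)
  also have "\<dots> = (\<Sum>c\<in>Basis. if c = b then x \<bullet> c else 0)"
    by (rule sum.cong) (simp_all add: ortho)
  also have "\<dots> = x \<bullet> b"
    using assms(3) by simp
  finally show ?thesis .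
qed

lemma distr_lborel_Basis_permutation:
  fixes m :: "'a::euclidean_space \<Rightarrow> 'b::euclidean_space"
  assumes lin: "linear m" and bij: "bij_betw m Basis Basis"
  shows "distr lborel borel m = lborel"
proof (rule lborel_eqI [symmetric])
  have [measurable]: "m \<in> borel_measurable borel"
    using lin by (intro borel_measurable_continuous_onI linear_continuous_on linear_conv_bounded_linear [THEN iffD1])
  fix l u :: 'b
  assume lu: "\<And>c. c \<in> Basis \<Longrightarrow> l \<bullet> c \<le> u \<bullet> c"
  define l' u' :: 'a
    where "l' = (\<Sum>b\<in>Basis. (l \<bullet> m b) *\<^sub>R b)" and "u' = (\<Sum>b\<in>Basis. (u \<bullet> m b) *\<^sub>R b)"
  have coords: "l' \<bullet> b = l \<bullet> m b" "u' \<bullet> b = u \<bullet> m b" if "b \<in> Basis" for b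
    using that by (simp_all add: l'_def u'_def inner_sum_left inner_Basis if_distrib cong: if_cong)
  have "m -` box l u = box l' u'"
  proof -
    have "x \<in> m -` box l u \<longleftrightarrow> (\<forall>c\<in>m ` Basis. l \<bullet> c < m x \<bullet> c \<and> m x \<bullet> c < u \<bullet> c)" for x
      using bij by (simp add: mem_box bij_betw_def)
    then show ?thesis
      by (auto simp: mem_box coords inner_image_Basis [OF lin bij])
  qed
  moreover have "l' \<bullet> b \<le> u' \<bullet> b" if "b \<in> Basis" for b
    using that lu bij by (auto simp: coords bij_betw_def)
  ultimately have "emeasure (distr lborel borel m) (box l u) = (\<Prod>b\<in>Basis. (u \<bullet> m b - l \<bullet> m b))"
    by (simp add: emeasure_distr coords inner_diff_left cong: prod.cong)
  also have "\<dots> = (\<Prod>c\<in>Basis. (u - l) \<bullet> c)"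
    using prod.reindex_bij_betw [OF bij, of "\<lambda>c. (u - l) \<bullet> c"] by (simp add: inner_diff_left)
  finally show "emeasure (distr lborel borel m) (box l u) = (\<Prod>c\<in>Basis. (u - l) \<bullet> c)" .
qed simp

lemma Basis_real_3: "(Basis :: (real^3) set) = {axis 1 1, axis 2 1, axis 3 1}"
  by (auto simp: Basis_vec_def UNIV_3)

lemma distr_lborel_vec3_prod: "distr lborel borel (\<lambda>v::real^3. (v$1, v$2, v$3)) = lborel"
proof (rule distr_lborel_Basis_permutation)
  show "linear (\<lambda>v::real^3. (v$1, v$2, v$3))"
    by (auto intro!: linearI)
  show "bij_betw (\<lambda>v::real^3. (v$1, v$2, v$3)) Basis Basis"
    unfolding bij_betw_def Basis_real_3
    by (auto simp: Basis_prod_def axis_def zero_prod_def)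
qed

lemma distr_lborel_vec3_complex: "distr lborel borel (\<lambda>v::real^3. (Complex (v$1) (v$2), v$3)) = lborel"
proof (rule distr_lborel_Basis_permutation)
  show "linear (\<lambda>v::real^3. (Complex (v$1) (v$2), v$3))"
    by (auto intro!: linearI simp: complex_eq_iff)
  show "bij_betw (\<lambda>v::real^3. (Complex (v$1) (v$2), v$3)) Basis Basis"
    unfolding bij_betw_def Basis_real_3
    by (auto simp: Basis_prod_def Basis_complex_def axis_def complex_eq_iff)
qed

lemma borel_measurable_indicator_comp:
  fixes g :: "'a::topological_space \<Rightarrow> 'b::topological_space"
  assumes "A \<in> sets borel" "continuous_on UNIV g"
  shows "(\<lambda>x. indicator A (g x) :: real) \<in> borel_measurable borel"
  using borel_measurable_continuous_onI [OF assms(2)] borel_measurable_indicator [OF assms(1)]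
  by (rule measurable_compose)

lemma integrable_lborel_bounded_support:
  fixes g :: "'a::euclidean_space \<Rightarrow> real"
  assumes "g \<in> borel_measurable borel" "\<And>x. \<bar>g x\<bar> \<le> M" "bounded B" "\<And>x. x \<notin> B \<Longrightarrow> g x = 0"
  shows "integrable lborel g"
proof -
  obtain R where "\<forall>x\<in>B. norm x \<le> R"
    using assms(3) unfolding bounded_iff by blast
  then have R: "B \<subseteq> cball 0 R"
    by auto
  have "integrable lborel (\<lambda>x. indicator (cball 0 R) x *\<^sub>R M)"
    by (rule borel_integrable_compact) (simp_all add: continuous_on_const)
  then show ?thesis
  proof (rule Bochner_Integration.integrable_bound)
    show "g \<in> borel_measurable lborel"
      using assms(1) by simp
    have "norm (g x) \<le> norm (indicator (cball 0 R) x *\<^sub>R M)" for x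
    proof (cases "x \<in> cball 0 R")
      case True
      then show ?thesis
        using assms(2) [of x] by simp
    next
      case False
      then have "x \<notin> B"
        using R by blast
      then show ?thesis
        using assms(4) by simp
    qed
    then show "AE x in lborel. norm (g x) \<le> norm (indicator (cball 0 R) x *\<^sub>R M)"
      by simp
  qed
qed

lemma absolutely_integrable_on_if_set_integrable_lborel:
  fixes g :: "'a::euclidean_space \<Rightarrow> 'b::euclidean_space"
  assumes "set_integrable lborel S g"
  shows "g absolutely_integrable_on S"
  using set_borel_integral_eq_integral(1) [OF assms]
    set_borel_integral_eq_integral(1) [OF set_integrable_norm [OF assms]]
  by (rule absolutely_integrable_onI)

lemma set_integral_translate:
  fixes g :: "real \<Rightarrow> real"
  assumes [measurable]: "g \<in> borel_measurable borel"
  shows "(LINT x:{a..<b}|lborel. g (x + c)) = (LINT x:{a + c..<b + c}|lborel. g x)"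
proof -
  have "(LINT x:{a + c..<b + c}|lborel. g x)
      = integral\<^sup>L (distr lborel borel ((+) c)) (\<lambda>x. indicator {a + c..<b + c} x *\<^sub>R g x)"
    by (simp add: lborel_distr_plus set_lebesgue_integral_def)
  also have "\<dots> = integral\<^sup>L lborel (\<lambda>x. indicator {a + c..<b + c} (c + x) *\<^sub>R g (c + x))"
    by (rule integral_distr) auto
  also have "\<dots> = (LINT x:{a..<b}|lborel. g (x + c))"
    unfolding set_lebesgue_integral_def
    by (intro Bochner_Integration.integral_cong refl) (auto simp: indicator_def add.commute)
  finally show ?thesis ..
qed

lemma set_integral_Ico_split:
  fixes g :: "real \<Rightarrow> real"
  assumes "continuous_on UNIV g" "a \<le> m" "m \<le> b"
  shows "(LINT x:{a..<b}|lborel. g x) = (LINT x:{a..<m}|lborel. g x) + (LINT x:{m..<b}|lborel. g x)"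
proof -
  have integrable: "set_integrable lborel {c..<d} g" for c d
  proof -
    have "set_integrable lborel {c..d} g"
      unfolding set_integrable_def
      by (rule borel_integrable_compact) (auto intro: continuous_on_subset [OF assms(1)])
    then show ?thesis
      by (rule set_integrable_subset) auto
  qed
  have "{a..<b} = {a..<m} \<union> {m..<b}" "{a..<m} \<inter> {m..<b} = {}"
    using assms(2,3) by auto
  then show ?thesis
    by (simp add: set_integral_Un integrable)
qed

lemma set_integral_periodic_shift:
  fixes g :: "real \<Rightarrow> real"
  assumes cont: "continuous_on UNIV g" and per: "\<And>x. g (x + p) = g x" and "0 < p"
  shows "(LINT x:{0..<p}|lborel. g (x + c)) = (LINT x:{0..<p}|lborel. g x)"
proof -
  interpret periodic_fun_simple g p
    by unfold_locales (rule per)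
  have [measurable]: "g \<in> borel_measurable borel"
    using cont by (rule borel_measurable_continuous_onI)
  define d where "d = p * frac (c / p)"
  have "0 \<le> frac (c / p)" "frac (c / p) < 1"
    by (rule frac_ge_0, rule frac_lt_1)
  then have d: "0 \<le> d" "d < p"
    using \<open>0 < p\<close> unfolding d_def by (simp, simp add: mult_less_cancel_left1)
  have c: "x + c = (x + d) + of_int \<lfloor>c / p\<rfloor> * p" for x
    using \<open>0 < p\<close> by (simp add: d_def frac_def algebra_simps)
  have "(LINT x:{0..<p}|lborel. g (x + c)) = (LINT x:{0..<p}|lborel. g (x + d))"
    unfolding c plus_of_int ..
  also have "\<dots> = (LINT x:{d..<p + d}|lborel. g x)"
    using set_integral_translate [of g 0 p d] by simp
  also have "\<dots> = (LINT x:{d..<p}|lborel. g x) + (LINT x:{p..<p + d}|lborel. g x)"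
    using d by (intro set_integral_Ico_split cont) auto
  also have "(LINT x:{p..<p + d}|lborel. g x) = (LINT x:{0..<d}|lborel. g x)"
    using set_integral_translate [of g 0 d p] by (simp add: per add.commute)
  also have "(LINT x:{d..<p}|lborel. g x) + (LINT x:{0..<d}|lborel. g x) = (LINT x:{0..<p}|lborel. g x)"
    using set_integral_Ico_split [OF cont, of 0 d p] d by simp
  finally show ?thesis .
qed

section \<open>The geodesics in normal form\<close>

definition tanh_half :: "real \<Rightarrow> real" where
  "tanh_half t = tanh (t / 2)"

definition geo_s :: "real \<Rightarrow> real \<Rightarrow> real" where
  "geo_s a t = a * (tanh_half t + 1) / 2"

definition geo_base :: "real \<Rightarrow> real \<Rightarrow> complex" where
  "geo_base a t = (of_real (tanh_half t) + \<i> * of_real (geo_s a t)) / (1 + \<i> * of_real (geo_s a t))"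

definition geo_angle :: "real \<Rightarrow> real \<Rightarrow> real" where
  "geo_angle a t = pi + 2 * arctan (geo_s a t)"

lemma tanh_half_bounds: "-1 < tanh_half t" "tanh_half t < 1"
  using tanh_real_bounds[of "t / 2"] by (auto simp: tanh_half_def)

lemma cis_geo_angle:
  "cis (geo_angle a t) = - (1 + \<i> * of_real (geo_s a t)) / (1 - \<i> * of_real (geo_s a t))"
  unfolding geo_angle_def by (rule cis_pi_plus_double_arctan)

lemma gammaH_normal_form: "gammaH \<beta> a t = cis (\<beta> + geo_angle a t) * geo_base a t"
proof -
  define T s where "T = tanh_half t" and "s = geo_s a t"
  have s: "of_real s = of_real a * (of_real T + 1) / (2 :: complex)"
    by (simp add: s_def T_def geo_s_def)
  have num: "(2 + \<i> * of_real a) * of_real T + \<i> * of_real a = 2 * (of_real T + \<i> * (of_real s :: complex))"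
    unfolding s by (simp add: algebra_simps)
  have den: "\<i> * of_real a * of_real T - 2 + \<i> * of_real a = 2 * (\<i> * (of_real s :: complex) - 1)"
    unfolding s by (simp add: algebra_simps)
  have "gammaH \<beta> a t = cis \<beta> * ((2 * (of_real T + \<i> * of_real s)) / (2 * (\<i> * of_real s - 1)))"
    unfolding gammaH_def tanh_half_def [symmetric] T_def [symmetric] num den cis_conv_exp ..
  also have "\<dots> = cis \<beta> * ((of_real T + \<i> * of_real s) / (\<i> * of_real s - 1))"
    by (subst mult_divide_mult_cancel_left) simp_all
  also have "(of_real T + \<i> * of_real s) / (\<i> * of_real s - 1)
      = - (1 + \<i> * of_real s) / (1 - \<i> * of_real s) * geo_base a t"
    unfolding geo_base_def T_def [symmetric] s_def [symmetric]
    by (simp add: divide_simps) (simp add: algebra_simps)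
  also have "cis \<beta> * (- (1 + \<i> * of_real s) / (1 - \<i> * of_real s) * geo_base a t)
      = cis \<beta> * cis (geo_angle a t) * geo_base a t"
    unfolding s_def cis_geo_angle by (rule mult.assoc [symmetric])
  finally show ?thesis
    by (simp add: cis_mult)
qed

lemma norm_geo_base_sq:
  "(cmod (geo_base a t))\<^sup>2 = ((tanh_half t)\<^sup>2 + (geo_s a t)\<^sup>2) / (1 + (geo_s a t)\<^sup>2)"
  by (simp add: geo_base_def norm_divide power_divide cmod_power2)

lemma cH_geo_base: "cH (geo_base a t) = (1 - (tanh_half t)\<^sup>2) / (2 * (1 + (geo_s a t)\<^sup>2))"
proof -
  have "1 + (geo_s a t)\<^sup>2 > 0" by (simp add: add_pos_nonneg)
  then show ?thesis
    unfolding cH_def norm_geo_base_sq by (simp add: field_simps)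
qed

lemma cH_geo_base_pos: "cH (geo_base a t) > 0"
proof -
  have "(tanh_half t)\<^sup>2 < 1"
    using tanh_half_bounds[of t] by (simp add: abs_square_less_1)
  then show ?thesis
    unfolding cH_geo_base by (simp add: add_pos_nonneg)
qed

lemma norm_geo_base_less_1: "cmod (geo_base a t) < 1"
  using cH_geo_base_pos[of a t] by (simp add: cH_def abs_square_less_1)

lemma cH_rotate [simp]: "cH (cis x * z) = cH z"
  by (simp add: cH_def norm_mult)

lemma cH_gammaH_mult_cis:
  "of_real (cH (gammaH \<beta> a t)) * cis (\<beta> + geo_angle a t)
    = - cis \<beta> * of_real ((1 - (tanh_half t)\<^sup>2) / 2) / (1 - \<i> * of_real (geo_s a t))\<^sup>2"
proof -
  define T s where "T = tanh_half t" and "s = geo_s a t"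
  have angle: "cis (\<beta> + geo_angle a t) = cis \<beta> * (- (1 + \<i> * of_real s) / (1 - \<i> * of_real s))"
    by (simp only: s_def cis_geo_angle flip: cis_mult)
  have speed: "cH (gammaH \<beta> a t) = ((1 - T\<^sup>2) / 2) / (1 + s\<^sup>2)"
    by (simp add: gammaH_normal_form cH_geo_base T_def s_def)
  have field_identity: "X / (x * y) * (c * (- x / y)) = - c * X / y\<^sup>2"
    if "x \<noteq> 0" "y \<noteq> 0" for X c x y :: complex
    using that by (simp add: field_simps power2_eq_square)
  show ?thesis
    unfolding angle speed of_real_divide one_plus_sq_eq_complex_factor T_def [symmetric] s_def [symmetric]
    by (rule field_identity) simp_all
qed

lemma gammaH_has_vector_derivative:
  "(gammaH \<beta> a has_vector_derivative of_real (cH (gammaH \<beta> a t)) * cis (\<beta> + geo_angle a t)) (at t)"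
proof -
  define T s where "T = tanh_half t" and "s = geo_s a t"
  define D where "D = \<i> * of_real a * of_real T - 2 + \<i> * (of_real a :: complex)"
  define M where "M w = exp (\<i> * of_real \<beta>) * (((2 + \<i> * of_real a) * w + \<i> * of_real a) /
      (\<i> * of_real a * w - 2 + \<i> * of_real a))" for w
  have D: "D = - 2 * (1 - \<i> * of_real s)"
    by (simp add: D_def s_def T_def geo_s_def field_simps)
  have "((\<lambda>t. of_real (tanh_half t) :: complex) has_vector_derivative of_real ((1 - T\<^sup>2) / 2)) (at t)"
    unfolding tanh_half_def T_def by (auto intro!: derivative_eq_intros)
  moreover have "(M has_field_derivative cis \<beta> * (- 4 / D\<^sup>2)) (at (of_real T))"
  proof -
    have "D \<noteq> 0"
      unfolding D by simp
    then show ?thesis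
      unfolding M_def D_def cis_conv_exp
      by (auto intro!: derivative_eq_intros simp: field_simps power2_eq_square)
  qed
  ultimately have "(M \<circ> (\<lambda>t. of_real (tanh_half t)) has_vector_derivative
      of_real ((1 - T\<^sup>2) / 2) * (cis \<beta> * (- 4 / D\<^sup>2))) (at t)"
    unfolding T_def by (rule field_vector_diff_chain_at)
  moreover have "M \<circ> (\<lambda>t. of_real (tanh_half t)) = gammaH \<beta> a"
    by (auto simp: gammaH_def M_def tanh_half_def)
  moreover have "of_real ((1 - T\<^sup>2) / 2) * (cis \<beta> * (- 4 / D\<^sup>2))
      = of_real (cH (gammaH \<beta> a t)) * cis (\<beta> + geo_angle a t)"
  proof -
    have field_identity: "X * (c * (- 4 / (- 2 * y)\<^sup>2)) = - c * X / y\<^sup>2" if "y \<noteq> 0" for X c y :: complex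
      using that by (simp add: field_simps power2_eq_square)
    show ?thesis
      unfolding cH_gammaH_mult_cis D T_def s_def by (rule field_identity) simp
  qed
  ultimately show ?thesis
    by simp
qed

lemma thetaH_eq: "thetaH \<beta> a t = normalize_angle (\<beta> + geo_angle a t)"
proof -
  have "cH (gammaH \<beta> a t) > 0"
    by (simp add: gammaH_normal_form cH_geo_base_pos)
  then have "vector_derivative (gammaH \<beta> a) (at t) / of_real (cH (gammaH \<beta> a t))
      = rcis 1 (\<beta> + geo_angle a t)"
    using vector_derivative_at [OF gammaH_has_vector_derivative] by (simp add: rcis_def)
  then show ?thesis
    unfolding thetaH_def by (simp add: Arg_rcis')
qed

lemma f_geodesic_eq:
  assumes "\<And>z \<theta>. f (z, \<theta> + 2 * pi) = f (z, \<theta>)"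
  shows "f (gammaH \<beta> a t, thetaH \<beta> a t)
    = f (cis (\<beta> + geo_angle a t) * geo_base a t, \<beta> + geo_angle a t)"
  using periodic_at_normalize_angle [of "\<lambda>\<theta>. f (_, \<theta>)"] assms
  by (simp add: thetaH_eq gammaH_normal_form)

lemma continuous_on_tanh_half [continuous_intros]:
  "continuous_on S g \<Longrightarrow> continuous_on S (\<lambda>x. tanh_half (g x))"
  unfolding tanh_half_def by (intro continuous_intros) auto

lemma continuous_on_geo_s [continuous_intros]:
  "continuous_on S g \<Longrightarrow> continuous_on S h \<Longrightarrow> continuous_on S (\<lambda>x. geo_s (g x) (h x))"
  unfolding geo_s_def by (intro continuous_intros) auto

lemma continuous_on_geo_base [continuous_intros]:
  "continuous_on S g \<Longrightarrow> continuous_on S h \<Longrightarrow> continuous_on S (\<lambda>x. geo_base (g x) (h x))"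
  unfolding geo_base_def by (intro continuous_intros) auto

lemma continuous_on_geo_angle [continuous_intros]:
  "continuous_on S g \<Longrightarrow> continuous_on S h \<Longrightarrow> continuous_on S (\<lambda>x. geo_angle (g x) (h x))"
  unfolding geo_angle_def by (intro continuous_intros)

lemma abs_le_of_norm_geo_base_le:
  assumes "0 \<le> r" "r < 1" "cmod (geo_base a t) \<le> r"
  shows "\<bar>t\<bar> \<le> 2 * artanh r" "\<bar>a\<bar> \<le> 2 / ((1 - r\<^sup>2) * (1 - r))"
proof -
  define T s where "T = tanh_half t" and "s = geo_s a t"
  have r2: "r\<^sup>2 < 1"
    using assms by (simp add: abs_square_less_1)
  have "(cmod (geo_base a t))\<^sup>2 \<le> r\<^sup>2"
    using assms by (simp add: power_mono)
  then have "T\<^sup>2 + s\<^sup>2 \<le> r\<^sup>2 * (1 + s\<^sup>2)"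
    unfolding norm_geo_base_sq T_def [symmetric] s_def [symmetric]
    by (simp add: divide_le_eq add_pos_nonneg)
  then have main: "(1 - r\<^sup>2) * (1 + s\<^sup>2) \<le> 1 - T\<^sup>2"
    by (simp add: algebra_simps)
  have "1 - r\<^sup>2 \<le> (1 - r\<^sup>2) * (1 + s\<^sup>2)"
    using r2 mult_left_mono [of 1 "1 + s\<^sup>2" "1 - r\<^sup>2"] by simp
  then have "T\<^sup>2 \<le> r\<^sup>2"
    using main by linarith
  then have T: "\<bar>T\<bar> \<le> r"
    using assms(1) power2_le_iff_abs_le by blast
  then have "tanh (\<bar>t\<bar> / 2) \<le> tanh (artanh r)"
    using assms by (simp add: tanh_artanh_real T_def tanh_half_def flip: tanh_real_abs)
  then show "\<bar>t\<bar> \<le> 2 * artanh r"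
    by simp
  have "(1 - r\<^sup>2) * (1 + s\<^sup>2) \<le> 1"
    using main zero_le_power2 [of T] by linarith
  then have "1 + s\<^sup>2 \<le> 1 / (1 - r\<^sup>2)"
    using r2 by (simp add: le_divide_eq mult.commute)
  moreover have "\<bar>s\<bar> \<le> 1 + s\<^sup>2"
    using zero_le_power2 [of "\<bar>s\<bar> - 1"] abs_ge_zero [of s] unfolding power2_diff by simp
  ultimately have s: "\<bar>s\<bar> \<le> 1 / (1 - r\<^sup>2)"
    by linarith
  have "\<bar>a\<bar> = 2 * \<bar>s\<bar> / (T + 1)"
    using T assms(2) by (simp add: s_def T_def geo_s_def abs_mult)
  also have "\<dots> \<le> 2 * (1 / (1 - r\<^sup>2)) / (1 - r)"
    using s T r2 assms by (intro frac_le) auto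
  finally show "\<bar>a\<bar> \<le> 2 / ((1 - r\<^sup>2) * (1 - r))"
    by simp
qed

section \<open>Geodesic coordinates on the unit tangent bundle\<close>

definition geo_base_da :: "real \<Rightarrow> real \<Rightarrow> complex" where
  "geo_base_da a t = \<i> * of_real ((1 - tanh_half t) * (1 + tanh_half t) / 2)
     / (1 + \<i> * of_real (geo_s a t))\<^sup>2"

definition geo_base_dt :: "real \<Rightarrow> real \<Rightarrow> complex" where
  "geo_base_dt a t = of_real ((1 - (tanh_half t)\<^sup>2) / 2) / (1 + \<i> * of_real (geo_s a t))
     + \<i> * of_real ((1 - tanh_half t) * a * (1 - (tanh_half t)\<^sup>2) / 4)
     / (1 + \<i> * of_real (geo_s a t))\<^sup>2"

lemma has_derivative_tanh_half [derivative_intros]: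
  assumes "(g has_derivative g') (at x within S)"
  shows "((\<lambda>x. tanh_half (g x)) has_derivative (\<lambda>h. g' h * ((1 - (tanh_half (g x))\<^sup>2) / 2)))
    (at x within S)"
proof -
  have "(tanh_half has_real_derivative (1 - (tanh_half (g x))\<^sup>2) / 2) (at (g x))"
    unfolding tanh_half_def by (auto intro!: derivative_eq_intros)
  then show ?thesis
    using assms by (rule DERIV_compose_FDERIV)
qed

lemma geo_base_has_derivative:
  "((\<lambda>v::real^3. geo_base (v$1) (v$2)) has_derivative
     (\<lambda>h. of_real (h$1) * geo_base_da (v$1) (v$2) + of_real (h$2) * geo_base_dt (v$1) (v$2)))
     (at v within S)"
proof -
  define a t where "a = v$1" and "t = v$2"
  define T dT s where "T = tanh_half t" and "dT = (1 - T\<^sup>2) / 2" and "s = geo_s a t"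
  define ds where "ds h = h$1 * ((1 + T) / 2) + h$2 * (a * dT / 2)" for h :: "real^3"
  have T: "((\<lambda>v::real^3. tanh_half (v$2)) has_derivative (\<lambda>h. h$2 * dT)) (at v within S)"
    unfolding dT_def T_def t_def by (auto intro!: derivative_eq_intros)
  have s_deriv: "((\<lambda>v::real^3. geo_s (v$1) (v$2)) has_derivative ds) (at v within S)"
    unfolding geo_s_def
    by (auto intro!: derivative_eq_intros simp: ds_def a_def T_def t_def dT_def field_simps)
  then have "((\<lambda>v::real^3. geo_base (v$1) (v$2)) has_derivative
      (\<lambda>h. ((of_real (h$2 * dT) + \<i> * of_real (ds h)) * (1 + \<i> * of_real s)
        - (of_real T + \<i> * of_real s) * (\<i> * of_real (ds h)))
        / ((1 + \<i> * of_real s) * (1 + \<i> * of_real s)))) (at v within S)"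
    unfolding geo_base_def s_def a_def t_def T_def
    by (auto intro!: derivative_eq_intros s_deriv simp: dT_def T_def t_def)
  moreover have "((of_real (h$2 * dT) + \<i> * of_real (ds h)) * (1 + \<i> * of_real s)
        - (of_real T + \<i> * of_real s) * (\<i> * of_real (ds h)))
        / ((1 + \<i> * of_real s) * (1 + \<i> * of_real s))
      = of_real (h$1) * geo_base_da (v$1) (v$2) + of_real (h$2) * geo_base_dt (v$1) (v$2)" for h
  proof -
    define D where "D = 1 + \<i> * of_real s"
    have N: "of_real T + \<i> * of_real s = D - of_real (1 - T)"
      by (simp add: D_def)
    have "D \<noteq> 0"
      by (simp add: D_def)
    then show ?thesis
      unfolding geo_base_da_def geo_base_dt_def a_def [symmetric] t_def [symmetric]
        T_def [symmetric] s_def [symmetric] D_def [symmetric] N ds_def dT_def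
      by (simp add: field_simps power2_eq_square)
  qed
  ultimately show ?thesis
    by simp
qed

lemma Im_cnj_geo_base_da_dt: "Im (cnj (geo_base_da a t) * geo_base_dt a t) = - (cH (geo_base a t))\<^sup>2"
proof -
  define T s where "T = tanh_half t" and "s = geo_s a t"
  define D where "D = 1 + \<i> * of_real s"
  define w where "w = \<i> * of_real (1 - T) / D\<^sup>2"
  have D: "D \<noteq> 0" "cnj D \<noteq> 0" "D * cnj D = of_real (1 + s\<^sup>2)"
    by (simp_all add: D_def algebra_simps power2_eq_square)
  have product: "cnj (geo_base_da a t) * geo_base_dt a t
      = of_real ((1 + T) / 2 * ((1 - T\<^sup>2) / 2)) * (cnj w / D)
        + of_real ((1 + T) / 2 * (a * (1 - T\<^sup>2) / 4)) * (w * cnj w)"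
  proof -
    have da: "geo_base_da a t = of_real ((1 + T) / 2) * w"
      by (simp add: geo_base_da_def w_def D_def T_def s_def algebra_simps)
    have dt: "geo_base_dt a t = of_real ((1 - T\<^sup>2) / 2) / D + of_real (a * (1 - T\<^sup>2) / 4) * w"
      by (simp add: geo_base_dt_def w_def D_def T_def s_def field_simps)
    show ?thesis
      unfolding da dt using D by (simp add: field_simps)
  qed
  have cnj_w: "cnj w / D = of_real ((1 - T) / (1 + s\<^sup>2)\<^sup>2) * (of_real s - \<i>)"
  proof -
    have "cnj w / D = - \<i> * of_real (1 - T) * D / (D * cnj D)\<^sup>2"
      using D(1,2) by (simp add: w_def field_simps power2_eq_square)
    also have "\<dots> = of_real ((1 - T) / (1 + s\<^sup>2)\<^sup>2) * (of_real s - \<i>)"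
      unfolding D(3) by (simp add: D_def field_simps)
    finally show ?thesis .
  qed
  have "Im (cnj (geo_base_da a t) * geo_base_dt a t)
      = - ((1 + T) / 2 * ((1 - T\<^sup>2) / 2) * ((1 - T) / (1 + s\<^sup>2)\<^sup>2))"
  proof -
    define q where "q = 1 + s\<^sup>2"
    have "q \<noteq> 0"
      unfolding q_def using zero_le_power2 [of s] by linarith
    then show ?thesis
      unfolding product cnj_w q_def [symmetric]
      by (simp add: field_simps power2_eq_square flip: complex_norm_square)
  qed
  also have "\<dots> = - (cH (geo_base a t))\<^sup>2"
    by (simp add: cH_geo_base T_def [symmetric] s_def [symmetric] power2_eq_square field_simps)
  finally show ?thesis .
qed

definition geo_coords :: "real^3 \<Rightarrow> real^3" where
  "geo_coords v = vector [Re (cis (v$3) * geo_base (v$1) (v$2)), Im (cis (v$3) * geo_base (v$1) (v$2)), v$3]"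

definition geo_coords_deriv :: "real^3 \<Rightarrow> real^3 \<Rightarrow> real^3" where
  "geo_coords_deriv v h =
     (let w = cis (v$3) * (of_real (h$1) * geo_base_da (v$1) (v$2) + of_real (h$2) * geo_base_dt (v$1) (v$2)
                + of_real (h$3) * (\<i> * geo_base (v$1) (v$2)))
      in vector [Re w, Im w, h$3])"

lemma geo_coords_has_derivative: "(geo_coords has_derivative geo_coords_deriv v) (at v within S)"
proof -
  have "((\<lambda>x::real^3. \<i> * of_real (x$3)) has_derivative (\<lambda>h. \<i> * of_real (h$3))) (at v within S)"
    by (auto intro!: derivative_eq_intros)
  from has_derivative_compose [OF this DERIV_exp [unfolded has_field_derivative_def]]
  have [derivative_intros]: "((\<lambda>x::real^3. exp (\<i> * of_real (x$3))) has_derivative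
      (\<lambda>h. exp (\<i> * of_real (v$3)) * (\<i> * of_real (h$3)))) (at v within S)"
    by simp
  have "((\<lambda>v::real^3. cis (v$3) * geo_base (v$1) (v$2)) has_derivative
      (\<lambda>h. cis (v$3) * (of_real (h$1) * geo_base_da (v$1) (v$2) + of_real (h$2) * geo_base_dt (v$1) (v$2)
        + of_real (h$3) * (\<i> * geo_base (v$1) (v$2))))) (at v within S)"
    unfolding cis_conv_exp
    by (auto intro!: derivative_eq_intros geo_base_has_derivative simp: algebra_simps)
  then show ?thesis
    unfolding geo_coords_def geo_coords_deriv_def Let_def
    by (intro has_derivative_vector_3 has_derivative_Re has_derivative_Im has_derivative_vec_nth)
qed

lemma det_geo_coords_deriv: "det (matrix (geo_coords_deriv v)) = - (cH (geo_base (v$1) (v$2)))\<^sup>2"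
proof -
  have "det (matrix (geo_coords_deriv v))
      = (cmod (cis (v$3)))\<^sup>2 * Im (cnj (geo_base_da (v$1) (v$2)) * geo_base_dt (v$1) (v$2))"
    unfolding geo_coords_deriv_def Let_def by (rule det_matrix_complex_lift)
  then show ?thesis
    unfolding Im_cnj_geo_base_da_dt by simp
qed

lemma inverse_one_minus_geo_base:
  "1 / (1 - geo_base a t) = Complex (1 / (1 - tanh_half t)) (geo_s a t / (1 - tanh_half t))"
proof -
  have "1 - tanh_half t \<noteq> 0"
    using tanh_half_bounds [of t] by simp
  then have "1 / (1 - geo_base a t) = (1 + \<i> * of_real (geo_s a t)) / of_real (1 - tanh_half t)"
    by (simp add: geo_base_def field_simps)
  then show ?thesis
    by (simp add: complex_eq_iff)
qed

lemma geo_base_inj: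
  assumes "geo_base a t = geo_base a' t'"
  shows "a = a'" "t = t'"
proof -
  have pos: "1 - tanh_half t > 0" "1 - tanh_half t' > 0" "1 + tanh_half t > 0"
    using tanh_half_bounds [of t] tanh_half_bounds [of t'] by simp_all
  have "Complex (1 / (1 - tanh_half t)) (geo_s a t / (1 - tanh_half t))
      = Complex (1 / (1 - tanh_half t')) (geo_s a' t' / (1 - tanh_half t'))"
    using arg_cong [OF assms, of "\<lambda>u. 1 / (1 - u)"] unfolding inverse_one_minus_geo_base .
  then have "1 / (1 - tanh_half t) = 1 / (1 - tanh_half t')"
    and s: "geo_s a t / (1 - tanh_half t) = geo_s a' t' / (1 - tanh_half t')"
    unfolding complex.inject by blast+
  then have T: "tanh_half t = tanh_half t'"
    using pos by (simp add: field_simps)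
  then show "t = t'"
    by (simp add: tanh_half_def)
  have "geo_s a t = geo_s a' t'"
    using s pos(2) unfolding T by (auto simp: divide_cancel_right)
  then show "a = a'"
    using T pos by (simp add: geo_s_def)
qed

lemma geo_base_surj:
  assumes "cmod u < 1"
  obtains a t where "geo_base a t = u"
proof -
  define z where "z = 1 / (1 - u)"
  have "u \<noteq> 1"
    using assms by auto
  have "Re z > 1 / 2"
  proof -
    define N where "N = (1 - Re u)\<^sup>2 + (Im u)\<^sup>2"
    have "Re u < 1"
      using abs_Re_le_cmod [of u] assms by linarith
    then have "N > 0"
      unfolding N_def by (simp add: add_pos_nonneg)
    have "(cmod u)\<^sup>2 < 1"
      using assms by (simp add: abs_square_less_1)
    moreover have "N = 1 - 2 * Re u + (cmod u)\<^sup>2"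
      unfolding N_def cmod_power2 by (simp add: power2_diff)
    ultimately have "N < 2 * (1 - Re u)"
      by (simp add: algebra_simps)
    moreover have Re_z: "Re z = (1 - Re u) / N"
      by (simp add: z_def N_def Re_divide cmod_power2)
    ultimately show ?thesis
      unfolding Re_z using \<open>N > 0\<close> by (simp add: field_simps)
  qed
  define T s where "T = 1 - 1 / Re z" and "s = Im z / Re z"
  have T: "-1 < T" "T < 1"
    using \<open>Re z > 1 / 2\<close> by (auto simp: T_def field_simps)
  define t a where "t = 2 * artanh T" and "a = 2 * s / (T + 1)"
  have "tanh_half t = T"
    using T by (simp add: tanh_half_def t_def tanh_artanh_real)
  moreover have "geo_s a t = s"
    using T \<open>tanh_half t = T\<close> by (simp add: geo_s_def a_def)
  ultimately have "1 / (1 - geo_base a t) = z"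
    using \<open>Re z > 1 / 2\<close> by (simp add: inverse_one_minus_geo_base T_def s_def complex_eq_iff)
  then have "geo_base a t = u"
    using \<open>u \<noteq> 1\<close> by (simp add: z_def field_simps)
  then show ?thesis
    by (rule that)
qed

definition angle_slab :: "(real^3) set" where
  "angle_slab = {v. 0 \<le> v$3 \<and> v$3 < 2 * pi}"

definition disc_cylinder :: "(real^3) set" where
  "disc_cylinder = {w. Complex (w$1) (w$2) \<in> ball 0 1 \<and> 0 \<le> w$3 \<and> w$3 < 2 * pi}"

lemma geo_coords_complex: "Complex (geo_coords v $ 1) (geo_coords v $ 2) = cis (v$3) * geo_base (v$1) (v$2)"
  unfolding geo_coords_def vector_3 by (rule complex_surj)

lemma geo_coords_3 [simp]: "geo_coords v $ 3 = v $ 3"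
  by (simp add: geo_coords_def)

lemma inj_geo_coords: "inj geo_coords"
proof (rule injI)
  fix v w :: "real^3"
  assume eq: "geo_coords v = geo_coords w"
  then have "v$3 = w$3"
    by (metis geo_coords_3)
  moreover have "cis (v$3) * geo_base (v$1) (v$2) = cis (w$3) * geo_base (w$1) (w$2)"
    using eq by (metis geo_coords_complex)
  ultimately have "geo_base (v$1) (v$2) = geo_base (w$1) (w$2)"
    by (simp add: cis_neq_zero)
  then have "v$1 = w$1" "v$2 = w$2"
    by (blast dest: geo_base_inj)+
  with \<open>v$3 = w$3\<close> show "v = w"
    by (simp add: vec_eq_iff forall_3)
qed

lemma geo_coords_image: "geo_coords ` angle_slab = disc_cylinder"
proof
  show "geo_coords ` angle_slab \<subseteq> disc_cylinder"
    using norm_geo_base_less_1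
    by (auto simp: angle_slab_def disc_cylinder_def geo_coords_complex norm_mult)
  show "disc_cylinder \<subseteq> geo_coords ` angle_slab"
  proof
    fix w
    assume w: "w \<in> disc_cylinder"
    then have "cmod (cis (- (w$3)) * Complex (w$1) (w$2)) < 1"
      by (simp add: disc_cylinder_def norm_mult)
    then obtain a t where at: "geo_base a t = cis (- (w$3)) * Complex (w$1) (w$2)"
      by (rule geo_base_surj)
    define v :: "real^3" where "v = vector [a, t, w$3]"
    have "Complex (geo_coords v $ 1) (geo_coords v $ 2) = Complex (w$1) (w$2)"
      unfolding geo_coords_complex by (simp add: v_def at cis_mult)
    then have "geo_coords v = w"
      by (simp add: vec_eq_iff forall_3 v_def)
    moreover have "v \<in> angle_slab"
      using w by (simp add: v_def angle_slab_def disc_cylinder_def)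
    ultimately show "w \<in> geo_coords ` angle_slab"
      by blast
  qed
qed

lemma angle_slab_borel [measurable]: "angle_slab \<in> sets borel"
  unfolding angle_slab_def by measurable

lemma disc_cylinder_borel [measurable]: "disc_cylinder \<in> sets borel"
proof -
  have "open ((\<lambda>w::real^3. Complex (w$1) (w$2)) -` ball 0 1)"
    by (intro open_vimage open_ball continuous_intros)
  then have "((\<lambda>w::real^3. Complex (w$1) (w$2)) -` ball 0 1) \<inter> angle_slab \<in> sets borel"
    using angle_slab_borel by (intro sets.Int) (auto intro: borel_open)
  moreover have "disc_cylinder = ((\<lambda>w::real^3. Complex (w$1) (w$2)) -` ball 0 1) \<inter> angle_slab"
    by (auto simp: disc_cylinder_def angle_slab_def)
  ultimately show ?thesis
    by simp
qed

lemma bounded_disc_cylinder: "bounded disc_cylinder"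
proof -
  have "disc_cylinder \<subseteq> cbox (vector [-1, -1, 0]) (vector [1, 1, 2 * pi])"
  proof
    fix w :: "real^3"
    assume "w \<in> disc_cylinder"
    then have "cmod (Complex (w$1) (w$2)) < 1" "0 \<le> w$3" "w$3 < 2 * pi"
      by (auto simp: disc_cylinder_def)
    moreover have "\<bar>w$1\<bar> \<le> cmod (Complex (w$1) (w$2))" "\<bar>w$2\<bar> \<le> cmod (Complex (w$1) (w$2))"
      using abs_Re_le_cmod [of "Complex (w$1) (w$2)"] abs_Im_le_cmod [of "Complex (w$1) (w$2)"] by simp_all
    ultimately show "w \<in> cbox (vector [-1, -1, 0]) (vector [1, 1, 2 * pi])"
      unfolding mem_box_cart(2) forall_3 by auto
  qed
  then show ?thesis
    using bounded_cbox bounded_subset by blast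
qed

lemma has_absolute_integral_geo_coords:
  fixes F :: "complex \<times> real \<Rightarrow> real"
  shows "(\<lambda>v. F (cis (v$3) * geo_base (v$1) (v$2), v$3)) absolutely_integrable_on angle_slab \<and>
      integral angle_slab (\<lambda>v. F (cis (v$3) * geo_base (v$1) (v$2), v$3)) = b
    \<longleftrightarrow> (\<lambda>w. F (Complex (w$1) (w$2), w$3) / (cH (Complex (w$1) (w$2)))\<^sup>2)
        absolutely_integrable_on disc_cylinder \<and>
      integral disc_cylinder (\<lambda>w. F (Complex (w$1) (w$2), w$3) / (cH (Complex (w$1) (w$2)))\<^sup>2) = b"
proof -
  define G where "G = (\<lambda>v::real^3. F (cis (v$3) * geo_base (v$1) (v$2), v$3))"
  define R where "R = (\<lambda>w::real^3. F (Complex (w$1) (w$2), w$3) / (cH (Complex (w$1) (w$2)))\<^sup>2)"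
  have jacobian: "\<bar>det (matrix (geo_coords_deriv v))\<bar> *\<^sub>R vec (R (geo_coords v)) = (vec (G v) :: real^1)" for v
  proof -
    have "cH (geo_base (v$1) (v$2)) > 0"
      by (rule cH_geo_base_pos)
    then show ?thesis
      by (simp add: G_def R_def det_geo_coords_deriv geo_coords_complex vec_eq_iff)
  qed
  have "angle_slab \<in> sets lebesgue"
    using angle_slab_borel by simp
  then have "(\<lambda>v. \<bar>det (matrix (geo_coords_deriv v))\<bar> *\<^sub>R vec (R (geo_coords v)) :: real^1)
        absolutely_integrable_on angle_slab
      \<and> integral angle_slab (\<lambda>v. \<bar>det (matrix (geo_coords_deriv v))\<bar> *\<^sub>R vec (R (geo_coords v))) = (vec b :: real^1)
    \<longleftrightarrow> (\<lambda>w. vec (R w) :: real^1) absolutely_integrable_on geo_coords ` angle_slab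
      \<and> integral (geo_coords ` angle_slab) (\<lambda>w. vec (R w)) = (vec b :: real^1)"
    by (rule has_absolute_integral_change_of_variables)
      (simp_all add: geo_coords_has_derivative inj_on_subset [OF inj_geo_coords])
  then have "G absolutely_integrable_on angle_slab \<and> integral angle_slab G = b
    \<longleftrightarrow> R absolutely_integrable_on disc_cylinder \<and> integral disc_cylinder R = b"
    unfolding jacobian geo_coords_image
    by (simp add: absolutely_integrable_on_1_iff integral_on_1_eq vec_eq_iff)
  then show ?thesis
    unfolding G_def R_def .
qed

lemma cH_borel_measurable [measurable]: "cH \<in> borel_measurable borel"
  unfolding cH_def by (intro borel_measurable_continuous_onI continuous_intros) auto

lemma cH_lower_bound:
  assumes "cmod z \<le> r"
  shows "(1 - r\<^sup>2) / 2 \<le> cH z"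
  using assms power_mono [OF assms norm_ge_zero] by (simp add: cH_def)

locale bundle_test_function =
  fixes f :: "complex \<times> real \<Rightarrow> real" and r :: real
  assumes continuous: "continuous_on UNIV f"
    and periodic: "\<And>z \<theta>. f (z, \<theta> + 2 * pi) = f (z, \<theta>)"
    and radius: "0 \<le> r" "r < 1"
    and support: "\<And>z \<theta>. r < cmod z \<Longrightarrow> f (z, \<theta>) = 0"
begin

lemma borel_measurable [measurable]: "f \<in> borel_measurable borel"
  using continuous by (rule borel_measurable_continuous_onI)

lemma f_bounded:
  obtains M where "\<And>p. \<bar>f p\<bar> \<le> M"
proof -
  have "compact (f ` (cball 0 r \<times> {-pi..pi}))"
    by (intro compact_continuous_image continuous_on_subset [OF continuous] compact_Times) auto
  then obtain M where M: "\<And>p. p \<in> cball 0 r \<times> {-pi..pi} \<Longrightarrow> \<bar>f p\<bar> \<le> M"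
    by (meson compact_imp_bounded bounded_real image_eqI)
  have "\<bar>f (z, \<theta>)\<bar> \<le> max M 0" for z \<theta>
  proof (cases "cmod z \<le> r")
    case True
    have "f (z, \<theta>) = f (z, normalize_angle \<theta>)"
      using periodic_at_normalize_angle [of "\<lambda>\<theta>. f (z, \<theta>)"] periodic by simp
    then show ?thesis
      using M [of "(z, normalize_angle \<theta>)"] True normalize_angle_normalized [of \<theta>] by simp
  qed (simp add: support)
  then show ?thesis
    using that [of "max M 0"] by (metis prod.collapse)
qed

lemma f_div_cH_sq_bounded:
  obtains C where "\<And>z \<theta>. \<bar>f (z, \<theta>) / (cH z)\<^sup>2\<bar> \<le> C"
proof -
  obtain M where M: "\<And>p. \<bar>f p\<bar> \<le> M"
    using f_bounded by blast
  have c: "0 < (1 - r\<^sup>2) / 2"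
    using radius by (simp add: abs_square_less_1)
  have "\<bar>f (z, \<theta>) / (cH z)\<^sup>2\<bar> \<le> M / ((1 - r\<^sup>2) / 2)\<^sup>2" for z \<theta>
  proof (cases "cmod z \<le> r")
    case True
    then have "((1 - r\<^sup>2) / 2)\<^sup>2 \<le> (cH z)\<^sup>2"
      using c cH_lower_bound by (intro power_mono) auto
    then show ?thesis
      using M [of "(z, \<theta>)"] M [of 0] c by (simp add: abs_divide frac_le)
  next
    case False
    then show ?thesis
      using M [of 0] by (simp add: support)
  qed
  then show ?thesis
    by (rule that)
qed

definition lift :: "real \<Rightarrow> real \<Rightarrow> real \<Rightarrow> real" where
  "lift a t \<theta> = f (cis \<theta> * geo_base a t, \<theta>)"

lemma lift_support:
  assumes "lift a t \<theta> \<noteq> 0"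
  shows "\<bar>t\<bar> \<le> 2 * artanh r" "\<bar>a\<bar> \<le> 2 / ((1 - r\<^sup>2) * (1 - r))"
proof -
  have "cmod (geo_base a t) \<le> r"
    using assms support [of "cis \<theta> * geo_base a t" \<theta>] by (force simp: lift_def norm_mult)
  then show "\<bar>t\<bar> \<le> 2 * artanh r" "\<bar>a\<bar> \<le> 2 / ((1 - r\<^sup>2) * (1 - r))"
    using abs_le_of_norm_geo_base_le radius by blast+
qed

lemma continuous_on_lift [continuous_intros]:
  "continuous_on S g \<Longrightarrow> continuous_on S h \<Longrightarrow> continuous_on S k \<Longrightarrow>
    continuous_on S (\<lambda>x. lift (g x) (h x) (k x))"
  unfolding lift_def
  by (rule continuous_on_compose2 [OF continuous]) (auto intro!: continuous_intros)

lemma lift_periodic: "lift a t (\<theta> + 2 * pi) = lift a t \<theta>"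
  by (simp add: lift_def periodic cis.ctr)

lemma integral_geodesics_eq_integral_lift:
  "(LINT \<beta>:{0..<2*pi}|lborel. (LINT t|lborel. f (gammaH \<beta> a t, thetaH \<beta> a t)))
    = (LINT t|lborel. (LINT \<theta>:{0..<2*pi}|lborel. lift a t \<theta>))"
proof -
  obtain M where M: "\<And>p. \<bar>f p\<bar> \<le> M"
    using f_bounded by blast
  define F where "F \<beta> t = indicator {0..<2*pi} \<beta> * lift a t (\<beta> + geo_angle a t)" for \<beta> t
  have geodesic: "f (gammaH \<beta> a t, thetaH \<beta> a t) = lift a t (\<beta> + geo_angle a t)" for \<beta> t
    using f_geodesic_eq [of f, OF periodic] by (simp add: lift_def)
  have "integrable lborel (\<lambda>p::real \<times> real. F (fst p) (snd p))"
  proof (rule integrable_lborel_bounded_support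
      [where M = M and B = "{0..2*pi} \<times> {- 2 * artanh r..2 * artanh r}"])
    show "(\<lambda>p::real \<times> real. F (fst p) (snd p)) \<in> borel_measurable borel"
      unfolding F_def
      by (intro borel_measurable_times borel_measurable_indicator_comp borel_measurable_continuous_onI
          continuous_intros) auto
    show "\<bar>F (fst p) (snd p)\<bar> \<le> M" for p
      using M [of "(cis (fst p + geo_angle a (snd p)) * geo_base a (snd p), fst p + geo_angle a (snd p))"]
        M [of 0]
      by (auto simp: F_def lift_def indicator_def)
    show "bounded ({0..2*pi} \<times> {- 2 * artanh r..2 * artanh r})"
      by (intro bounded_Times bounded_closed_interval)
    show "F (fst p) (snd p) = 0" if "p \<notin> {0..2*pi} \<times> {- 2 * artanh r..2 * artanh r}" for p
    proof (rule ccontr)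
      assume "F (fst p) (snd p) \<noteq> 0"
      then have "fst p \<in> {0..<2*pi}" "lift a (snd p) (fst p + geo_angle a (snd p)) \<noteq> 0"
        by (auto simp: F_def indicator_def split: if_splits)
      then show False
        using that lift_support(1) by (cases p) (force simp: abs_le_iff)
    qed
  qed
  then have "integrable (lborel \<Otimes>\<^sub>M lborel) (case_prod F)"
    by (simp add: lborel_prod case_prod_beta')
  then have "(\<integral>\<beta>. (\<integral>t. F \<beta> t \<partial>lborel) \<partial>lborel) = (\<integral>t. (\<integral>\<beta>. F \<beta> t \<partial>lborel) \<partial>lborel)"
    by (rule lborel_pair.Fubini_integral [symmetric])
  moreover have "(LINT \<theta>:{0..<2*pi}|lborel. lift a t (\<theta> + geo_angle a t))
      = (LINT \<theta>:{0..<2*pi}|lborel. lift a t \<theta>)" for t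
    by (rule set_integral_periodic_shift) (auto intro: continuous_intros lift_periodic)
  ultimately show ?thesis
    by (simp add: geodesic F_def set_lebesgue_integral_def)
qed

definition lift_slab :: "real \<times> real \<times> real \<Rightarrow> real" where
  "lift_slab p = indicator {0..<2*pi} (snd (snd p)) * lift (fst p) (fst (snd p)) (snd (snd p))"

lemma borel_measurable_lift_slab [measurable]: "lift_slab \<in> borel_measurable borel"
  unfolding lift_slab_def
  by (intro borel_measurable_times borel_measurable_indicator_comp borel_measurable_continuous_onI
      continuous_intros) auto

lemma lift_slab_support:
  assumes "p \<notin> {- 2 / ((1 - r\<^sup>2) * (1 - r))..2 / ((1 - r\<^sup>2) * (1 - r))}
    \<times> {- 2 * artanh r..2 * artanh r} \<times> {0..2*pi}"
  shows "lift_slab p = 0"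
proof (rule ccontr)
  obtain a t \<theta> where p: "p = (a, t, \<theta>)"
    by (cases p) auto
  assume "lift_slab p \<noteq> 0"
  then have "\<theta> \<in> {0..<2*pi}" "lift a t \<theta> \<noteq> 0"
    by (auto simp: p lift_slab_def indicator_def split: if_splits)
  then show False
    using assms lift_support by (force simp: p abs_le_iff)
qed

lemma integrable_lift_slab:
  "integrable lborel lift_slab" "integrable lborel (\<lambda>q. lift_slab (a, q))"
proof -
  obtain M where M: "\<And>p. \<bar>f p\<bar> \<le> M"
    using f_bounded by blast
  have bound: "\<bar>lift_slab p\<bar> \<le> M" for p
    using M [of "(cis (snd (snd p)) * geo_base (fst p) (fst (snd p)), snd (snd p))"] M [of 0]
    by (auto simp: lift_slab_def lift_def indicator_def)
  show "integrable lborel lift_slab"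
    by (rule integrable_lborel_bounded_support [OF borel_measurable_lift_slab bound _ lift_slab_support])
      (auto intro!: bounded_Times)
  show "integrable lborel (\<lambda>q. lift_slab (a, q))"
  proof (rule integrable_lborel_bounded_support [OF _ bound])
    show "(\<lambda>q. lift_slab (a, q)) \<in> borel_measurable borel"
      using borel_measurable_continuous_onI [of "\<lambda>q::real \<times> real. (a, q)"]
      by (auto intro: measurable_compose [OF _ borel_measurable_lift_slab] continuous_intros)
    show "bounded ({- 2 * artanh r..2 * artanh r} \<times> {0..2*pi})"
      by (intro bounded_Times bounded_closed_interval)
    show "lift_slab (a, q) = 0" if "q \<notin> {- 2 * artanh r..2 * artanh r} \<times> {0..2*pi}" for q
      using that by (intro lift_slab_support) auto
  qed
qed

lemma iterated_integral_lift:
  "(LINT a|lborel. (LINT t|lborel. (LINT \<theta>:{0..<2*pi}|lborel. lift a t \<theta>)))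
    = (LINT v:angle_slab|lborel. lift (v$1) (v$2) (v$3))"
proof -
  have "(LINT t|lborel. (LINT \<theta>:{0..<2*pi}|lborel. lift a t \<theta>)) = (\<integral>q. lift_slab (a, q) \<partial>lborel)" for a
    using lborel_pair.integral_fst' [of "\<lambda>q. lift_slab (a, q)"] integrable_lift_slab(2)
    by (simp add: lborel_prod lift_slab_def set_lebesgue_integral_def mult.commute)
  then have "(LINT a|lborel. (LINT t|lborel. (LINT \<theta>:{0..<2*pi}|lborel. lift a t \<theta>)))
      = integral\<^sup>L lborel lift_slab"
    using lborel_pair.integral_fst' [of lift_slab] integrable_lift_slab(1) by (simp add: lborel_prod)
  also have "\<dots> = integral\<^sup>L (distr lborel borel (\<lambda>v::real^3. (v$1, v$2, v$3))) lift_slab"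
    by (simp add: distr_lborel_vec3_prod)
  also have "\<dots> = (LINT v:angle_slab|lborel. lift (v$1) (v$2) (v$3))"
    by (subst integral_distr) (auto simp: set_lebesgue_integral_def lift_slab_def angle_slab_def indicator_def)
  finally show ?thesis .
qed

lemma set_integrable_lift: "set_integrable lborel angle_slab (\<lambda>v. lift (v$1) (v$2) (v$3))"
proof -
  have "integrable (distr lborel borel (\<lambda>v::real^3. (v$1, v$2, v$3))) lift_slab"
    using integrable_lift_slab(1) by (simp add: distr_lborel_vec3_prod)
  then show ?thesis
    by (subst (asm) integrable_distr_eq)
      (auto simp: set_integrable_def lift_slab_def angle_slab_def indicator_def
        cong: Bochner_Integration.integrable_cong)
qed

lemma set_integrable_disc_cylinder:
  "set_integrable lborel disc_cylinder (\<lambda>w. f (Complex (w$1) (w$2), w$3) / (cH (Complex (w$1) (w$2)))\<^sup>2)"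
proof -
  obtain C where C: "\<And>z \<theta>. \<bar>f (z, \<theta>) / (cH z)\<^sup>2\<bar> \<le> C"
    using f_div_cH_sq_bounded by blast
  have [measurable]: "(\<lambda>w::real^3. Complex (w$1) (w$2)) \<in> borel_measurable borel"
    by (intro borel_measurable_continuous_onI continuous_intros)
  have bound: "\<bar>indicator disc_cylinder w *\<^sub>R (f (Complex (w$1) (w$2), w$3) / (cH (Complex (w$1) (w$2)))\<^sup>2)\<bar>
      \<le> max C 0" for w
    using C [of "Complex (w$1) (w$2)" "w$3"] by (simp add: indicator_def le_max_iff_disj)
  have "(\<lambda>w. indicator disc_cylinder w *\<^sub>R (f (Complex (w$1) (w$2), w$3) / (cH (Complex (w$1) (w$2)))\<^sup>2))
      \<in> borel_measurable borel"
    by measurable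
  then show ?thesis
    unfolding set_integrable_def
    by (rule integrable_lborel_bounded_support [OF _ bound bounded_disc_cylinder]) simp
qed

lemma integral_disc_cylinder:
  "integral disc_cylinder (\<lambda>w. f (Complex (w$1) (w$2), w$3) / (cH (Complex (w$1) (w$2)))\<^sup>2)
    = set_lebesgue_integral (lborel \<Otimes>\<^sub>M lborel) (ball 0 1 \<times> {0..<2*pi}) (\<lambda>p. f p / (cH (fst p))\<^sup>2)"
proof -
  define Q where "Q = (\<lambda>p::complex \<times> real. indicator (ball 0 1 \<times> {0..<2*pi}) p * (f p / (cH (fst p))\<^sup>2))"
  have "ball 0 1 \<times> {0..<2*pi} \<in> sets borel"
    by (intro borel_Times) auto
  then have Q_measurable: "Q \<in> borel_measurable borel"
    unfolding Q_def
    by (intro borel_measurable_times borel_measurable_indicator borel_measurable_divide borel_measurable_power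
        measurable_compose [OF borel_measurable_continuous_onI cH_borel_measurable] continuous_intros) auto
  have "set_lebesgue_integral (lborel \<Otimes>\<^sub>M lborel) (ball 0 1 \<times> {0..<2*pi}) (\<lambda>p. f p / (cH (fst p))\<^sup>2)
      = integral\<^sup>L (distr lborel borel (\<lambda>v::real^3. (Complex (v$1) (v$2), v$3))) Q"
    by (simp add: distr_lborel_vec3_complex lborel_prod Q_def set_lebesgue_integral_def)
  also have "\<dots> = (LINT w:disc_cylinder|lborel. f (Complex (w$1) (w$2), w$3) / (cH (Complex (w$1) (w$2)))\<^sup>2)"
    by (subst integral_distr [OF _ Q_measurable])
      (auto intro!: borel_measurable_continuous_onI continuous_intros
        simp: Q_def set_lebesgue_integral_def disc_cylinder_def indicator_def)
  also have "\<dots> = integral disc_cylinder (\<lambda>w. f (Complex (w$1) (w$2), w$3) / (cH (Complex (w$1) (w$2)))\<^sup>2)"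
    by (rule set_borel_integral_eq_integral(2) [OF set_integrable_disc_cylinder])
  finally show ?thesis ..
qed

theorem integral_over_geodesics:
  "(LINT a|lborel. set_lebesgue_integral lborel {0..<2*pi} (\<lambda>\<beta>. LINT t|lborel.
      f (gammaH \<beta> a t, thetaH \<beta> a t)))
    = set_lebesgue_integral (lborel \<Otimes>\<^sub>M lborel) (ball 0 1 \<times> {0..<2*pi}) (\<lambda>p. f p / (cH (fst p))\<^sup>2)"
proof -
  let ?R = "\<lambda>w. f (Complex (w$1) (w$2), w$3) / (cH (Complex (w$1) (w$2)))\<^sup>2"
  have "?R absolutely_integrable_on disc_cylinder"
    by (rule absolutely_integrable_on_if_set_integrable_lborel [OF set_integrable_disc_cylinder])
  have "(LINT a|lborel. set_lebesgue_integral lborel {0..<2*pi} (\<lambda>\<beta>. LINT t|lborel.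
      f (gammaH \<beta> a t, thetaH \<beta> a t)))
      = (LINT a|lborel. (LINT t|lborel. (LINT \<theta>:{0..<2*pi}|lborel. lift a t \<theta>)))"
    by (simp add: integral_geodesics_eq_integral_lift)
  also have "\<dots> = integral angle_slab (\<lambda>v. lift (v$1) (v$2) (v$3))"
    unfolding iterated_integral_lift by (rule set_borel_integral_eq_integral(2) [OF set_integrable_lift])
  also have "\<dots> = integral disc_cylinder ?R"
    using has_absolute_integral_geo_coords [of f "integral disc_cylinder ?R"] \<open>?R absolutely_integrable_on _\<close>
    unfolding lift_def by blast
  also have "\<dots> = set_lebesgue_integral (lborel \<Otimes>\<^sub>M lborel) (ball 0 1 \<times> {0..<2*pi}) (\<lambda>p. f p / (cH (fst p))\<^sup>2)"
    by (rule integral_disc_cylinder)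
  finally show ?thesis .
qed

end

lemma bundle_test_function_if_Cc_inf_SD:
  assumes "Cc_inf_SD f"
  obtains r where "bundle_test_function f r"
proof -
  obtain K where K: "C_inf f" "\<And>z \<theta>. f (z, \<theta> + 2 * pi) = f (z, \<theta>)" "compact K" "K \<subseteq> ball 0 1"
    "\<And>z \<theta>. z \<notin> K \<Longrightarrow> f (z, \<theta>) = 0"
    using assms unfolding Cc_inf_SD_def by blast
  obtain r where "r < 1" "K \<subseteq> cball 0 r"
    using compact_subset_ball_imp_cball [OF K(3,4)] .
  have "bundle_test_function f (max r 0)"
  proof
    show "continuous_on UNIV f"
      using K(1) by (rule C_inf_continuous)
    show "f (z, \<theta> + 2 * pi) = f (z, \<theta>)" for z \<theta>
      by (rule K(2))
    show "0 \<le> max r 0" "max r 0 < 1"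
      using \<open>r < 1\<close> by auto
    show "f (z, \<theta>) = 0" if "max r 0 < cmod z" for z \<theta>
    proof -
      have "z \<notin> K"
        using that \<open>K \<subseteq> cball 0 r\<close> by auto
      then show ?thesis
        by (rule K(5))
    qed
  qed
  then show ?thesis
    by (rule that)
qed

theorem proposition3p10:
  fixes f :: "complex \<times> real \<Rightarrow> real"
  assumes "Cc_inf_SD f"
  shows "(LINT a|lborel. set_lebesgue_integral lborel {0..<2*pi} (\<lambda>\<beta>. LINT t|lborel.
            f (gammaH \<beta> a t, thetaH \<beta> a t)))
         = set_lebesgue_integral (lborel \<Otimes>\<^sub>M lborel) (ball 0 1 \<times> {0..<2*pi})
            (\<lambda>p. f p / (cH (fst p))\<^sup>2)"
proof -
  obtain r where "bundle_test_function f r"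
    using assms by (rule bundle_test_function_if_Cc_inf_SD)
  then show ?thesis
    by (rule bundle_test_function.integral_over_geodesics)
qed

end
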